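(* The sequence $(\mathrm{mr}(d)^d)_{d\ \mathrm{even},\,d\ge 2}$ has an accumulation point in the interval $[1,U]$, where $U=\tfrac{7+3\sqrt5}{2}=6.854102\ldots$.
   Context: For an algebraic integer $\alpha$ with conjugates $\alpha_1,\dots,\alpha_d$, $\operatorname{house}(\alpha)=\max_i|\alpha_i|$. An algebraic integer is reciprocal if $1/\alpha$ is a conjugate of $\alpha$. $\mathrm{mr}(d)$ denotes the minimum of $\operatorname{house}(\alpha)$ over all reciprocal algebraic integers $\alpha$ of degree $d$ that are not roots of unity. *)

theory Defs
  imports "HOL-Analysis.Analysis" "HOL-Computational_Algebra.Computational_Algebra"
begin

definition min_poly_Q :: "complex \<Rightarrow> rat poly" where
  "min_poly_Q \<alpha> = (THE p. lead_coeff p = 1 \<and> irreducible p \<and> poly (map_poly of_rat p) \<alpha> = 0)"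

definition alg_degree :: "complex \<Rightarrow> nat" where
  "alg_degree \<alpha> = degree (min_poly_Q \<alpha>)"

definition conjugates :: "complex \<Rightarrow> complex set" where
  "conjugates \<alpha> = {z. poly (map_poly of_rat (min_poly_Q \<alpha>)) z = 0}"

definition house :: "complex \<Rightarrow> real" where
  "house \<alpha> = Max (norm ` conjugates \<alpha>)"

definition reciprocal :: "complex \<Rightarrow> bool" where
  "reciprocal \<alpha> \<longleftrightarrow> \<alpha> \<noteq> 0 \<and> 1 / \<alpha> \<in> conjugates \<alpha>"

definition root_of_unity :: "complex \<Rightarrow> bool" where
  "root_of_unity \<alpha> \<longleftrightarrow> (\<exists>n>0. \<alpha> ^ n = 1)"

definition mr :: "nat \<Rightarrow> real" where
  "mr d = Inf {house \<alpha> | \<alpha>. algebraic_int \<alpha> \<and> reciprocal \<alpha> \<and> alg_degree \<alpha> = d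
                              \<and> \<not> root_of_unity \<alpha>}"

end

theory Submission
  imports Defs "Berlekamp_Zassenhaus.Factor_Bound"
begin

text \<open>For \<open>n = 5\<^sup>k\<close> the trinomial \<open>f = x\<^sup>2\<^sup>n + 3x\<^sup>n + 1\<close> is irreducible over \<open>\<rat>\<close>: after the
  shift \<open>x \<mapsto> x + 1\<close> it is congruent to \<open>x\<^sup>2\<^sup>n\<close> modulo 5 (Frobenius) and its constant term is
  \<open>f(1) = 5\<close>, so Eisenstein's criterion at 5 and Gauss's lemma apply. The roots of \<open>f\<close> are the
  \<open>n\<close>-th roots of the roots \<open>-\<beta>\<close>, \<open>-1/\<beta>\<close> of \<open>w\<^sup>2 + 3w + 1\<close>, where \<open>\<beta> = (3 + \<surd>5)/2\<close>. So the real
  root \<open>-\<beta>\<^bsup>1/n\<^esup>\<close> is a reciprocal algebraic integer of degree \<open>2n\<close>, not a root of unity, whose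
  house is \<open>\<beta>\<^bsup>1/n\<^esup>\<close>; hence \<open>mr(2n)\<^sup>2\<^sup>n \<le> \<beta>\<^sup>2 = (7 + 3\<surd>5)/2\<close>. Since a reciprocal number has a
  conjugate of modulus at least 1, also \<open>mr(2n) \<ge> 1\<close>, and Bolzano--Weierstrass finishes the proof.\<close>

text \<open>Gauss's lemma comes from \<open>Factor_Bound\<close>, which also loads HOL-Algebra; its polynomial
  constants would shadow those of \<open>HOL-Computational_Algebra\<close>.\<close>
hide_const (open) up_ring.coeff up_ring.monom module.smult

section \<open>Frobenius congruence and Eisenstein's criterion\<close>

lemma prime_dvd_power_add_sub:
  fixes x y :: "'a::comm_ring_1"
  assumes "prime p"
  shows "of_nat p dvd (x + y) ^ p - x ^ p - y ^ p"
proof -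
  have p0: "p > 0" using assms prime_gt_0_nat by blast
  have "(x + y) ^ p = (\<Sum>i\<le>p. of_nat (p choose i) * x ^ i * y ^ (p - i))"
    by (rule binomial_ring)
  also have "\<dots> = (\<Sum>i\<in>{1..<p}. of_nat (p choose i) * x ^ i * y ^ (p - i)) + x ^ p + y ^ p"
  proof -
    have "{..p} = insert 0 (insert p {1..<p})" using p0 by auto
    thus ?thesis using p0 by (simp add: algebra_simps)
  qed
  finally have "(x + y) ^ p - x ^ p - y ^ p = (\<Sum>i\<in>{1..<p}. of_nat (p choose i) * x ^ i * y ^ (p - i))"
    by simp
  also have "of_nat p dvd \<dots>"
  proof (intro dvd_sum dvd_mult2)
    fix i assume "i \<in> {1..<p}"
    then obtain m where "p choose i = p * m"
      using assms dvd_choose_prime[of i p] by (auto elim: dvdE)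
    thus "of_nat p dvd (of_nat (p choose i) :: 'a)" by simp
  qed
  finally show ?thesis .
qed

lemma prime_dvd_power_prime_power_add_sub:
  fixes x y :: "'a::comm_ring_1"
  assumes "prime p"
  shows "of_nat p dvd (x + y) ^ (p ^ k) - x ^ (p ^ k) - y ^ (p ^ k)"
proof (induction k)
  case 0
  show ?case by simp
next
  case (Suc k)
  define A where "A = (x + y) ^ (p ^ k)"
  define B where "B = x ^ (p ^ k) + y ^ (p ^ k)"
  have "A - B dvd A ^ p - B ^ p"
    by (simp add: power_diff_sumr2)
  moreover have "of_nat p dvd A - B"
    using Suc.IH by (simp add: A_def B_def diff_diff_eq)
  ultimately have "of_nat p dvd A ^ p - B ^ p"
    by (rule dvd_trans[rotated])
  moreover have "of_nat p dvd B ^ p - x ^ (p ^ Suc k) - y ^ (p ^ Suc k)"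
    using prime_dvd_power_add_sub[OF assms, of "x ^ (p ^ k)" "y ^ (p ^ k)"]
    by (simp add: B_def power_mult[symmetric] mult.commute)
  ultimately have "of_nat p dvd (A ^ p - B ^ p) + (B ^ p - x ^ (p ^ Suc k) - y ^ (p ^ Suc k))"
    by (rule dvd_add)
  thus ?case by (simp add: A_def power_mult[symmetric] mult.commute algebra_simps)
qed

lemma eisenstein_const_coeff_dvd:
  fixes F G H :: "int poly"
  assumes "prime p" and F: "F = G * H" and "degree H > 0"
    and lead: "\<not> p dvd lead_coeff F"
    and coeffs: "\<And>i. i < degree F \<Longrightarrow> p dvd coeff F i"
    and G0: "p dvd coeff G 0"
  shows "p dvd coeff H 0"
proof (rule ccontr)
  assume H0: "\<not> p dvd coeff H 0"
  have "F \<noteq> 0" using lead by (intro notI) simp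
  hence "G \<noteq> 0" "H \<noteq> 0" using F by simp_all
  hence deg: "degree F = degree G + degree H" using F degree_mult_eq by blast
  have lead_G: "\<not> p dvd coeff G (degree G)"
    using lead F by (metis dvd_mult2 lead_coeff_mult)
  define i where "i = (LEAST i. \<not> p dvd coeff G i)"
  have i: "\<not> p dvd coeff G i" "\<And>j. j < i \<Longrightarrow> p dvd coeff G j" "i \<le> degree G"
    unfolding i_def using lead_G by (fact LeastI, use not_less_Least in blast, fact Least_le)
  have "coeff F i = (\<Sum>j<i. coeff G j * coeff H (i - j)) + coeff G i * coeff H 0"
    using F by (simp add: coeff_mult lessThan_Suc_atMost[symmetric])
  moreover have "p dvd (\<Sum>j<i. coeff G j * coeff H (i - j))"
    using i(2) by (intro dvd_sum dvd_mult2) simp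
  moreover have "p dvd coeff F i"
    using coeffs i(3) deg \<open>degree H > 0\<close> by simp
  ultimately have "p dvd coeff G i * coeff H 0"
    by (simp add: dvd_add_right_iff)
  thus False using \<open>prime p\<close> i(1) H0 by (simp add: prime_dvd_mult_iff)
qed

theorem eisenstein_irreducible\<^sub>d:
  fixes F :: "int poly"
  assumes "prime p" and "degree F > 0"
    and lead: "\<not> p dvd lead_coeff F"
    and coeffs: "\<And>i. i < degree F \<Longrightarrow> p dvd coeff F i"
    and const: "\<not> p\<^sup>2 dvd coeff F 0"
  shows "irreducible\<^sub>d F"
proof (rule irreducible\<^sub>dI)
  show "degree F > 0" by fact
next
  fix G H assume "degree G > 0" "degree H > 0" and F: "F = G * H"
  have F': "F = H * G" using F by (simp only: mult.commute)
  have F0: "coeff F 0 = coeff G 0 * coeff H 0" unfolding F by (simp only: coeff_mult_0)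
  moreover have "p dvd coeff F 0" using coeffs \<open>degree F > 0\<close> .
  ultimately have "p dvd coeff G 0 \<or> p dvd coeff H 0"
    using \<open>prime p\<close> by (simp add: prime_dvd_mult_iff)
  hence "p dvd coeff G 0" "p dvd coeff H 0"
    using eisenstein_const_coeff_dvd[OF \<open>prime p\<close> F \<open>degree H > 0\<close> lead coeffs]
      eisenstein_const_coeff_dvd[OF \<open>prime p\<close> F' \<open>degree G > 0\<close> lead coeffs]
    by blast+
  hence "p * p dvd coeff F 0" unfolding F0 by (rule mult_dvd_mono)
  thus False using const by (simp add: power2_eq_square)
qed

lemma irreducible\<^sub>d_if_irreducible\<^sub>d_pcompose:
  fixes f q :: "'a::idom poly"
  assumes "irreducible\<^sub>d (f \<circ>\<^sub>p q)" and "degree q > 0"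
  shows "irreducible\<^sub>d f"
proof (rule irreducible\<^sub>dI)
  show "degree f > 0" using assms by (auto simp: degree_pcompose)
  fix G H assume G: "degree G < degree f" and H: "degree H < degree f" and "f = G * H"
  have "f \<circ>\<^sub>p q = (G \<circ>\<^sub>p q) * (H \<circ>\<^sub>p q)"
    unfolding \<open>f = G * H\<close> by (rule pcompose_mult)
  moreover have "degree (G \<circ>\<^sub>p q) < degree (f \<circ>\<^sub>p q)" "degree (H \<circ>\<^sub>p q) < degree (f \<circ>\<^sub>p q)"
    unfolding degree_pcompose using G H \<open>degree q > 0\<close> by simp_all
  ultimately show False using irreducible\<^sub>dD(2)[OF assms(1)] by blast
qed

section \<open>Minimal polynomials, the house and \<open>mr\<close>\<close>

interpretation of_rat_poly_hom: map_poly_idom_hom of_rat ..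

lemma poly_map_of_rat_unit_neq_0:
  fixes u :: "rat poly" and x :: "'a::field_char_0"
  assumes "is_unit u"
  shows "poly (map_poly of_rat u) x \<noteq> 0"
  using assms by (elim is_unit_polyE) (auto simp: of_rat_hom.map_poly_pCons_hom)

lemma irreducible_factor_with_root:
  fixes Q :: "rat poly" and x :: "'a::field_char_0"
  assumes "Q \<noteq> 0" and "poly (map_poly of_rat Q) x = 0"
  obtains q where "irreducible q" and "poly (map_poly of_rat q) x = 0"
proof -
  have factored: "map_poly of_rat Q
      = map_poly of_rat (unit_factor Q) * prod_mset (image_mset (map_poly of_rat) (prime_factorization Q))"
    by (metis prime_decomposition of_rat_poly_hom.hom_mult of_rat_poly_hom.hom_prod_mset)
  have "poly (map_poly of_rat Q) x = poly (map_poly of_rat (unit_factor Q)) x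
      * (\<Prod>q\<in>#prime_factorization Q. poly (map_poly of_rat q) x)"
    unfolding factored by (simp only: poly_mult poly_prod_mset)
  moreover have "poly (map_poly of_rat (unit_factor Q)) x \<noteq> 0"
    using assms(1) by (intro poly_map_of_rat_unit_neq_0) simp
  ultimately obtain q where "q \<in># prime_factorization Q" "poly (map_poly of_rat q) x = 0"
    using assms(2) by (auto simp: prod_mset_zero_iff)
  thus thesis
    using that in_prime_factors_imp_prime prime_elem_imp_irreducible by blast
qed

lemma irreducible_dvd_if_common_root:
  fixes p q :: "rat poly" and x :: "'a::field_char_0"
  assumes "irreducible p"
    and "poly (map_poly of_rat p) x = 0" and "poly (map_poly of_rat q) x = 0"
  shows "p dvd q"
proof -
  define g where "g = gcd p q"
  have "fst (bezout_coefficients p q) * p + snd (bezout_coefficients p q) * q = g"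
    unfolding g_def by (rule bezout_coefficients_fst_snd)
  hence "poly (map_poly of_rat g) x = 0"
    using assms(2,3) by (auto simp: hom_distribs)
  hence "\<not> is_unit g" using poly_map_of_rat_unit_neq_0 by blast
  moreover have "g dvd p" by (simp add: g_def)
  ultimately have "p dvd g" using \<open>irreducible p\<close> by (auto simp: irreducible_altdef)
  thus ?thesis by (simp add: g_def)
qed

lemma monic_irreducible_common_root_eq:
  fixes p q :: "rat poly" and x :: "'a::field_char_0"
  assumes "monic p" "irreducible p" "poly (map_poly of_rat p) x = 0"
    and "monic q" "irreducible q" "poly (map_poly of_rat q) x = 0"
  shows "p = q"
proof (rule associated_eqI)
  show "p dvd q" using assms(2,3,6) by (rule irreducible_dvd_if_common_root)
  show "q dvd p" using assms(5,6,3) by (rule irreducible_dvd_if_common_root)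
qed (use assms in \<open>simp_all add: normalize_monic\<close>)

lemma monic_irreducible_root_exists:
  assumes "algebraic x"
  obtains p :: "rat poly" where "monic p" "irreducible p" "poly (map_poly of_rat p) x = 0"
proof -
  obtain P where "P \<noteq> 0" "poly (of_int_poly P) x = 0"
    using assms by (elim algebraicE')
  moreover have "map_poly of_rat (of_int_poly P) = (of_int_poly P :: 'a poly)"
    by (simp add: map_poly_map_poly o_def)
  ultimately obtain q where q: "irreducible q" "poly (map_poly of_rat q) x = 0"
    using irreducible_factor_with_root[of "of_int_poly P" x] by auto
  hence "q \<noteq> 0" by auto
  show thesis
  proof (rule that[of "smult (inverse (lead_coeff q)) q"])
    show "monic (smult (inverse (lead_coeff q)) q)" using \<open>q \<noteq> 0\<close> by simp
    show "irreducible (smult (inverse (lead_coeff q)) q)" using q(1) \<open>q \<noteq> 0\<close> by simp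
    show "poly (map_poly of_rat (smult (inverse (lead_coeff q)) q)) x = 0"
      using q(2) by (simp add: of_rat_hom.map_poly_hom_smult)
  qed
qed

lemma min_poly_Q_eqI:
  assumes "monic p" "irreducible p" "poly (map_poly of_rat p) x = 0"
  shows "min_poly_Q x = p"
  unfolding min_poly_Q_def
  using assms monic_irreducible_common_root_eq[of _ x] by (intro the_equality) blast+

lemma min_poly_Q:
  assumes "algebraic x"
  shows "monic (min_poly_Q x)" and "poly (map_poly of_rat (min_poly_Q x)) x = 0"
  using monic_irreducible_root_exists[OF assms] min_poly_Q_eqI by metis+

lemma conjugates_finite: "algebraic x \<Longrightarrow> finite (conjugates x)"
proof -
  assume "algebraic x"
  hence "map_poly of_rat (min_poly_Q x) \<noteq> (0 :: complex poly)"
    using min_poly_Q(1) by (metis of_rat_hom.hom_lead_coeff of_rat_1 leading_coeff_0_iff one_neq_zero)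
  thus ?thesis unfolding conjugates_def by (rule poly_roots_finite)
qed

lemma mem_conjugates_self: "algebraic x \<Longrightarrow> x \<in> conjugates x"
  using min_poly_Q(2) by (simp add: conjugates_def)

lemma norm_le_house: "algebraic x \<Longrightarrow> z \<in> conjugates x \<Longrightarrow> norm z \<le> house x"
  unfolding house_def by (simp add: conjugates_finite)

lemma house_le: "algebraic x \<Longrightarrow> (\<And>z. z \<in> conjugates x \<Longrightarrow> norm z \<le> r) \<Longrightarrow> house x \<le> r"
  unfolding house_def using mem_conjugates_self by (intro Max.boundedI) (auto simp: conjugates_finite)

lemma one_le_house_if_reciprocal:
  assumes "algebraic x" and "reciprocal x"
  shows "1 \<le> house x"
proof (cases "norm x \<ge> 1")
  case True
  thus ?thesis using norm_le_house[OF assms(1) mem_conjugates_self[OF assms(1)]] by linarith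
next
  case False
  hence "1 \<le> norm (1 / x)" using assms(2) by (simp add: reciprocal_def norm_divide field_simps)
  also have "\<dots> \<le> house x" using assms by (intro norm_le_house) (simp_all add: reciprocal_def)
  finally show ?thesis .
qed

lemma mr_bounds:
  assumes "algebraic_int \<alpha>" "reciprocal \<alpha>" "alg_degree \<alpha> = d" "\<not> root_of_unity \<alpha>"
  shows "1 \<le> mr d" and "mr d \<le> house \<alpha>"
proof -
  define S where "S = {house \<alpha> | \<alpha>. algebraic_int \<alpha> \<and> reciprocal \<alpha> \<and> alg_degree \<alpha> = d
                                  \<and> \<not> root_of_unity \<alpha>}"
  have mem: "house \<alpha> \<in> S" using assms unfolding S_def by blast
  have lower: "1 \<le> y" if "y \<in> S" for y
    using that one_le_house_if_reciprocal algebraic_int_imp_algebraic unfolding S_def by blast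
  show "1 \<le> mr d"
    unfolding mr_def S_def[symmetric] using mem lower by (intro cInf_greatest) auto
  show "mr d \<le> house \<alpha>"
    unfolding mr_def S_def[symmetric] using mem lower by (intro cInf_lower bdd_belowI)
qed

section \<open>The trinomial \<open>x\<^sup>2\<^sup>n + 3x\<^sup>n + 1\<close>\<close>

definition trinomial :: "nat \<Rightarrow> int poly" where
  "trinomial n = monom 1 (2 * n) + monom 3 n + 1"

lemma poly_trinomial:
  "poly (of_int_poly (trinomial n)) (z :: 'a::comm_ring_1) = z ^ (2 * n) + 3 * z ^ n + 1"
  by (simp add: trinomial_def hom_distribs poly_monom)

lemma poly_trinomial_rat:
  "poly (map_poly of_rat (of_int_poly (trinomial n))) (z :: 'a::field_char_0)
    = z ^ (2 * n) + 3 * z ^ n + 1"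
  by (simp add: map_poly_map_poly o_def poly_trinomial)

lemma pcompose_trinomial: "trinomial n \<circ>\<^sub>p q = q ^ (2 * n) + 3 * q ^ n + 1"
proof -
  have "map_poly (\<lambda>x. [:x:]) (trinomial n) = of_int_poly (trinomial n)"
    by (rule map_poly_cong) (simp_all add: of_int_poly)
  thus ?thesis by (simp add: pcompose_altdef poly_trinomial)
qed

lemma degree_trinomial: "n > 0 \<Longrightarrow> degree (trinomial n) = 2 * n"
  unfolding trinomial_def
  by (subst add.assoc, subst degree_add_eq_left)
    (auto intro: le_less_trans[OF degree_add_le_max] simp: degree_monom_eq)

lemma lead_coeff_trinomial: "n > 0 \<Longrightarrow> lead_coeff (trinomial n) = 1"
  by (simp add: degree_trinomial) (simp add: trinomial_def)

lemma trinomial_shift_congruence: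
  "[:5:] dvd trinomial (5 ^ k) \<circ>\<^sub>p [:1, 1:] - monom 1 (2 * 5 ^ k)"
proof -
  define X :: "int poly" where "X = monom 1 1"
  define A where "A = (X + 1) ^ (5 ^ k)"
  define Y where "Y = X ^ (5 ^ k)"
  have shift: "[:1, 1:] = X + 1"
    unfolding X_def by (rule poly_eqI) (simp add: coeff_pCons coeff_monom split: nat.split)
  have "5 dvd A - Y - 1"
    using prime_dvd_power_prime_power_add_sub[of 5 X 1 k] by (simp add: A_def Y_def)
  moreover have "trinomial (5 ^ k) \<circ>\<^sub>p [:1, 1:] - monom 1 (2 * 5 ^ k)
      = (A - Y - 1) * (A + Y + 4) + 5 * (Y + 1)"
  proof -
    have "monom 1 (2 * 5 ^ k) = Y ^ 2"
      unfolding Y_def X_def x_pow_n by (simp add: power2_eq_square mult_monom mult_2)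
    moreover have "trinomial (5 ^ k) \<circ>\<^sub>p [:1, 1:] = A ^ 2 + 3 * A + 1"
      unfolding pcompose_trinomial shift A_def by (simp add: mult.commute[of 2] power_mult)
    ultimately show ?thesis by (simp add: algebra_simps power2_eq_square)
  qed
  ultimately have "5 dvd trinomial (5 ^ k) \<circ>\<^sub>p [:1, 1:] - monom 1 (2 * 5 ^ k)"
    by simp
  thus ?thesis by (simp only: numeral_poly)
qed

lemma irreducible\<^sub>d_trinomial: "irreducible\<^sub>d (trinomial (5 ^ k))"
proof (rule irreducible\<^sub>d_if_irreducible\<^sub>d_pcompose)
  define F where "F = trinomial (5 ^ k) \<circ>\<^sub>p [:1, 1:]"
  have deg: "degree F = 2 * 5 ^ k"
    by (simp add: F_def degree_pcompose degree_trinomial)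
  have lead: "lead_coeff F = 1"
    unfolding F_def by (subst lead_coeff_comp) (simp_all add: lead_coeff_trinomial)
  have "5 dvd coeff F i" if "i < degree F" for i
  proof -
    have "5 dvd coeff (F - monom 1 (2 * 5 ^ k)) i"
      using trinomial_shift_congruence[of k, folded F_def] by (simp only: const_poly_dvd_iff)
    thus ?thesis using that deg by (simp add: coeff_monom)
  qed
  moreover have "coeff F 0 = 5"
    by (simp add: F_def poly_0_coeff_0[symmetric] poly_pcompose trinomial_def poly_monom)
  ultimately show "irreducible\<^sub>d F"
    by (intro eisenstein_irreducible\<^sub>d[of 5]) (simp_all add: deg lead[unfolded deg])
qed simp

lemma irreducible_trinomial: "irreducible (of_int_poly (trinomial (5 ^ k)) :: rat poly)"
  using irreducible\<^sub>d_int_rat[OF irreducible\<^sub>d_trinomial] by (simp add: irreducible_connect_field)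

definition beta :: real where
  "beta = (3 + sqrt 5) / 2"

lemma beta_quadratic: "beta\<^sup>2 = 3 * beta - 1"
  by (simp add: beta_def power2_eq_square field_simps)

lemma beta_bounds: "3 / 2 < beta" "beta < 3"
proof -
  have "0 < sqrt 5" "sqrt 5 < 3" using real_sqrt_less_iff[of 5 9] by simp_all
  thus "3 / 2 < beta" "beta < 3" by (simp_all add: beta_def)
qed

lemma beta_squared: "beta\<^sup>2 = (7 + 3 * sqrt 5) / 2"
  by (simp add: beta_quadratic) (simp add: beta_def field_simps)

lemma norm_le_beta_if_quadratic:
  fixes w :: complex
  assumes "w\<^sup>2 + 3 * w + 1 = 0"
  shows "norm w \<le> beta"
proof -
  have "(w + of_real beta) * (w + of_real (3 - beta)) = w\<^sup>2 + 3 * w + of_real (3 * beta - beta\<^sup>2)"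
    by (simp add: algebra_simps power2_eq_square)
  hence "(w + of_real beta) * (w + of_real (3 - beta)) = 0"
    using assms by (simp add: beta_quadratic)
  hence "w = - of_real beta \<or> w = - of_real (3 - beta)"
    by (auto simp: add_eq_0_iff2)
  thus ?thesis
  proof
    assume "w = - of_real beta"
    thus ?thesis using beta_bounds by simp
  next
    assume "w = - of_real (3 - beta)"
    thus ?thesis using beta_bounds by (simp only: norm_minus_cancel norm_of_real)
  qed
qed

lemma norm_root_trinomial_le:
  fixes z :: complex
  assumes "n > 0" and "z ^ (2 * n) + 3 * z ^ n + 1 = 0"
  shows "norm z \<le> root n beta"
proof -
  have "(z ^ n)\<^sup>2 + 3 * z ^ n + 1 = 0"
    using assms(2) by (simp add: power_mult[symmetric] mult.commute)
  hence "norm z ^ n \<le> beta"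
    using norm_le_beta_if_quadratic[of "z ^ n"] by (simp add: norm_power)
  have "norm z = root n (norm z ^ n)"
    using assms(1) by (simp add: real_root_power_cancel)
  also have "\<dots> \<le> root n beta"
    using \<open>norm z ^ n \<le> beta\<close> assms(1) by simp
  finally show ?thesis .
qed

definition trinomial_root :: "nat \<Rightarrow> complex" where
  "trinomial_root n = - of_real (root n beta)"

lemma trinomial_root_is_root:
  assumes "odd n"
  shows "trinomial_root n ^ (2 * n) + 3 * trinomial_root n ^ n + 1 = 0"
proof -
  have "n > 0" using assms by presburger
  hence "trinomial_root n ^ n = - of_real beta"
    using assms beta_bounds
    by (simp add: trinomial_root_def power_minus_odd real_root_pow_pos flip: of_real_power)
  hence "trinomial_root n ^ (2 * n) + 3 * trinomial_root n ^ n + 1 = of_real (beta\<^sup>2 - 3 * beta + 1)"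
    by (simp add: power_mult[symmetric] mult.commute[of 2] power_mult)
  thus ?thesis by (simp add: beta_quadratic)
qed

lemma min_poly_Q_trinomial_root:
  "min_poly_Q (trinomial_root (5 ^ k)) = of_int_poly (trinomial (5 ^ k))"
  by (rule min_poly_Q_eqI)
    (simp_all add: lead_coeff_trinomial irreducible_trinomial poly_trinomial_rat trinomial_root_is_root)

lemma conjugates_trinomial_root:
  "conjugates (trinomial_root (5 ^ k)) = {z. z ^ (2 * 5 ^ k) + 3 * z ^ 5 ^ k + 1 = 0}"
  by (simp add: conjugates_def min_poly_Q_trinomial_root poly_trinomial_rat)

lemma trinomial_roots_closed_under_inverse:
  fixes z :: "'a::field"
  assumes "z ^ (2 * n) + 3 * z ^ n + 1 = 0"
  shows "(1 / z) ^ (2 * n) + 3 * (1 / z) ^ n + 1 = 0"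
proof (cases "z = 0")
  case False
  have "(1 / z) ^ (2 * n) + 3 * (1 / z) ^ n + 1 = (z ^ (2 * n) + 3 * z ^ n + 1) / z ^ (2 * n)"
    using False by (simp add: field_simps power_mult mult.commute[of 2] power2_eq_square)
  thus ?thesis using assms by simp
qed (use assms in \<open>cases "n = 0"; simp\<close>)

lemma norm_trinomial_root: "n > 0 \<Longrightarrow> norm (trinomial_root n) = root n beta"
  using beta_bounds by (simp add: trinomial_root_def)

lemma trinomial_root_witness:
  fixes k :: nat
  defines "\<alpha> \<equiv> trinomial_root (5 ^ k)"
  shows "algebraic_int \<alpha>" "reciprocal \<alpha>" "alg_degree \<alpha> = 2 * 5 ^ k" "\<not> root_of_unity \<alpha>"
    and "house \<alpha> \<le> root (5 ^ k) beta"
proof -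
  have root: "\<alpha> ^ (2 * 5 ^ k) + 3 * \<alpha> ^ 5 ^ k + 1 = 0"
    unfolding \<alpha>_def by (rule trinomial_root_is_root) simp
  have norm: "norm \<alpha> = root (5 ^ k) beta"
    unfolding \<alpha>_def by (simp add: norm_trinomial_root)
  have "root (5 ^ k) beta > 1"
    using beta_bounds by simp
  show "algebraic_int \<alpha>"
    unfolding algebraic_int_altdef_ipoly
    using root by (intro exI[of _ "trinomial (5 ^ k)"]) (simp add: poly_trinomial lead_coeff_trinomial)
  thus "reciprocal \<alpha>"
    using root norm \<open>root (5 ^ k) beta > 1\<close> trinomial_roots_closed_under_inverse[OF root]
    by (auto simp: reciprocal_def \<alpha>_def conjugates_trinomial_root)
  show "alg_degree \<alpha> = 2 * 5 ^ k"
    by (simp add: alg_degree_def \<alpha>_def min_poly_Q_trinomial_root degree_trinomial)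
  show "\<not> root_of_unity \<alpha>"
  proof
    assume "root_of_unity \<alpha>"
    then obtain m where "m > 0" "\<alpha> ^ m = 1" by (auto simp: root_of_unity_def)
    hence "root (5 ^ k) beta ^ m = 1" using norm by (metis norm_one norm_power)
    moreover have "root (5 ^ k) beta ^ m > 1"
      using \<open>root (5 ^ k) beta > 1\<close> \<open>m > 0\<close> by (rule one_less_power)
    ultimately show False by simp
  qed
  show "house \<alpha> \<le> root (5 ^ k) beta"
    using \<open>algebraic_int \<alpha>\<close> by (intro house_le algebraic_int_imp_algebraic norm_root_trinomial_le)
      (simp_all add: \<alpha>_def conjugates_trinomial_root)
qed

lemma mr_power_bounds:
  "mr (2 * 5 ^ k) ^ (2 * 5 ^ k) \<in> {1 .. (7 + 3 * sqrt 5) / 2}"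
proof -
  note witness = trinomial_root_witness[of k]
  have lower: "1 \<le> mr (2 * 5 ^ k)" and upper: "mr (2 * 5 ^ k) \<le> root (5 ^ k) beta"
    using mr_bounds[OF witness(1-4)] witness(5) by auto
  have "mr (2 * 5 ^ k) ^ (2 * 5 ^ k) \<le> root (5 ^ k) beta ^ (2 * 5 ^ k)"
    using lower upper by (intro power_mono) auto
  also have "\<dots> = (root (5 ^ k) beta ^ 5 ^ k)\<^sup>2"
    by (simp add: mult.commute flip: power_mult)
  also have "\<dots> = (7 + 3 * sqrt 5) / 2"
    using beta_bounds by (simp add: real_root_pow_pos beta_squared)
  finally show ?thesis using lower by simp
qed

theorem corollary4:
  shows "\<exists>L \<in> {1 .. (7 + 3 * sqrt 5) / 2}. \<exists>r :: nat \<Rightarrow> nat.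
           strict_mono r \<and> (\<forall>k. even (r k) \<and> r k \<ge> 2) \<and>
           ((\<lambda>k. mr (r k) ^ r k) \<longlongrightarrow> L) sequentially"
proof -
  obtain L s where L: "L \<in> {1 .. (7 + 3 * sqrt 5) / 2}" and "strict_mono s"
    and lim: "((\<lambda>k. mr (2 * 5 ^ k) ^ (2 * 5 ^ k)) \<circ> s) \<longlonglongrightarrow> L"
    using compact_imp_seq_compact[OF compact_Icc] mr_power_bounds unfolding seq_compact_def by meson
  define r :: "nat \<Rightarrow> nat" where "r k = 2 * 5 ^ s k" for k
  have "strict_mono r"
    using \<open>strict_mono s\<close> by (simp add: r_def strict_mono_def)
  moreover have "even (r k) \<and> r k \<ge> 2" for k
    by (simp add: r_def)
  moreover have "((\<lambda>k. mr (r k) ^ r k) \<longlongrightarrow> L) sequentially"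
    using lim by (simp add: r_def o_def)
  ultimately show ?thesis using L by blast
qed

end
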